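(* Let $h\ge1$ be an integer and $r$ a real number with $r\ge 36h^3$. Let $\beta$ be a real-valued function on the positive integers such that $\beta(m)=0$ for all $m\le r$, and such that for every integer $m>r$ there exist positive integers $m_1,m_2$ with $m_1,m_2\ge m/3$, $m\le m_1+m_2\le m+h^{3/2}\sqrt m$, and $$\beta(m)\le \beta(m_1)+\beta(m_2)+h^{3/2}\sqrt m.$$ Then for every positive integer $m$, $$\beta(m)\le\begin{cases}\dfrac{10h^{3/2}m}{\sqrt{r/3}}-10h^{3/2}\sqrt m, & \text{if } m\ge r/3,\\[2mm] 0,&\text{otherwise.}\end{cases}$$ *)

theory Defs
  imports Complex_Main
begin

end

theory Submission
  imports Defs
begin

(* Write H = h^(3/2) and s = sqrt(r/3), so that r = 3 s^2 and the
   hypothesis r >= 36 h^3 becomes 12 H^2 <= s^2, i.e. q = H/s satisfies q^2 <= 1/12.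
   The claimed bound is B(m) = 10 H m / s - 10 H sqrt m for m >= s^2 and 0 below.
   Strong induction on m: for m <= r we have beta m = 0 <= B m, since B is nonnegative.
   For m > r the recursion splits m into m1, m2 >= m/3; these parts are smaller than m
   because H sqrt m < m/3 once m > r.  The induction step then reduces to the real
   inequality B(m1) + B(m2) + H sqrt m <= B(m), whose heart is the concavity estimate
   sqrt m1 + sqrt m2 >= (11/10 + q) sqrt m for m1, m2 >= m/3 with m1 + m2 >= m. *)

text \<open>Two numbers that are each at least a third of \<open>c\<close> and together at least \<open>c\<close> have
  square roots summing to at least \<open>1.39 * sqrt c\<close>; we only need \<open>(11/10 + q) * sqrt c\<close>
  for \<open>q\<^sup>2 \<le> 1/12\<close>.\<close>
lemma sqrt_sum_lower_bound:
  fixes a b c q :: real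
  assumes c: "c > 0" and a: "a \<ge> c/3" and b: "b \<ge> c/3" and ab: "a + b \<ge> c"
    and q: "q \<ge> 0" "q^2 \<le> 1/12"
  shows "(11/10 + q) * sqrt c \<le> sqrt a + sqrt b"
proof -
  have a0: "a \<ge> 0" "b \<ge> 0" using a b c by auto
  \<comment> \<open>The product \<open>a*b\<close> is smallest when one factor is \<open>c/3\<close> and the other \<open>2c/3\<close>.\<close>
  have "(a - c/3) * (b - c/3) \<ge> 0" using a b by simp
  hence "a*b \<ge> c*(a+b)/3 - c*c/9" by (simp add: algebra_simps)
  moreover have "c*(a+b) \<ge> c*c" using ab c by (intro mult_left_mono) auto
  ultimately have "a*b \<ge> 2/9 * c^2" by (simp add: power2_eq_square)
  moreover have "(7/15 * c)^2 \<le> 2/9 * c^2"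
    unfolding power_mult_distrib by (intro mult_right_mono) (auto simp: power2_eq_square)
  ultimately have "(7/15 * c)^2 \<le> a*b" by linarith
  hence prod: "7/15 * c \<le> sqrt (a*b)" by (rule real_le_rsqrt)
  have q_le: "q \<le> 29/100"
  proof (rule ccontr)
    assume "\<not> q \<le> 29/100"
    hence "q^2 > (29/100)^2" by (intro power_strict_mono) auto
    thus False using q by (simp add: power2_eq_square)
  qed
  have sq: "(sqrt a + sqrt b)^2 = a + b + 2 * sqrt (a*b)"
    using a0 by (simp add: power2_eq_square algebra_simps real_sqrt_mult)
  have "((11/10 + q) * sqrt c)^2 = (11/10 + q)^2 * c" using c by (simp add: power_mult_distrib)
  also have "\<dots> \<le> (139/100)^2 * c" using q q_le c by (intro mult_right_mono power_mono) auto
  also have "\<dots> \<le> (sqrt a + sqrt b)^2" using sq prod ab c by (simp add: power2_eq_square)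
  finally show ?thesis by (rule power2_le_imp_le) (use a0 in auto)
qed

definition growth_bound :: "real \<Rightarrow> real \<Rightarrow> real \<Rightarrow> real" where
  "growth_bound H s x = 10 * H * x / s - 10 * H * sqrt x"

lemma growth_bound_nonneg:
  assumes H: "H > 0" and s: "s > 0" and x: "s^2 \<le> x"
  shows "growth_bound H s x \<ge> 0"
proof -
  have x0: "x \<ge> 0" using x zero_le_power2[of s] by linarith
  have "s \<le> sqrt x" using x s real_le_rsqrt by blast
  hence "s * sqrt x \<le> sqrt x * sqrt x" using x0 by (intro mult_right_mono) auto
  also have "\<dots> = x" using x0 by simp
  finally have "sqrt x \<le> x / s" using s by (simp add: field_simps)
  hence "10 * H * sqrt x \<le> 10 * H * (x / s)" using H by (intro mult_left_mono) auto
  thus ?thesis unfolding growth_bound_def by simp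
qed

text \<open>The linear part grows by at most \<open>10 H q sqrt x\<close> (since \<open>a + b \<le> x + H sqrt x\<close>),
  while the concavity estimate gains \<open>10 H (1/10 + q) sqrt x\<close> in the square-root part,
  which also pays for the extra \<open>H sqrt x\<close>.\<close>
lemma growth_bound_step:
  fixes H s x a b :: real
  assumes H: "H > 0" and s: "s > 0" and q: "12 * H^2 \<le> s^2" and x: "x > 0"
    and a: "a \<ge> x/3" and b: "b \<ge> x/3"
    and lower: "x \<le> a + b" and upper: "a + b \<le> x + H * sqrt x"
  shows "growth_bound H s a + growth_bound H s b + H * sqrt x \<le> growth_bound H s x"
proof -
  define q where "q = H / s"
  have q0: "q \<ge> 0" unfolding q_def using H s by simp
  have q2: "q^2 \<le> 1/12" unfolding q_def power_divide using q s by (simp add: field_simps)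
  have "(11/10 + q) * sqrt x \<le> sqrt a + sqrt b"
    using sqrt_sum_lower_bound[OF x a b lower q0 q2] .
  hence "10*H*((11/10 + q) * sqrt x) \<le> 10*H*(sqrt a + sqrt b)"
    using H by (intro mult_left_mono) auto
  hence roots: "10*H*q*sqrt x + 11*H*sqrt x \<le> 10*H*sqrt a + 10*H*sqrt b"
    by (simp add: algebra_simps)
  have "10*H*(a + b)/s \<le> 10*H*(x + H * sqrt x)/s"
    using upper H s by (intro divide_right_mono mult_left_mono) auto
  also have "\<dots> = 10*H*x/s + 10*H*q*sqrt x"
    unfolding q_def by (simp add: algebra_simps add_divide_distrib)
  finally have linear: "10*H*a/s + 10*H*b/s \<le> 10*H*x/s + 10*H*q*sqrt x"
    by (simp add: algebra_simps add_divide_distrib)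
  show ?thesis unfolding growth_bound_def using roots linear by linarith
qed

text \<open>Above \<open>r = 3 s\<^sup>2\<close> the error term \<open>H sqrt m\<close> is below \<open>m/3\<close>, so both parts of a
  split are strictly smaller than \<open>m\<close> and strong induction applies.\<close>
lemma error_term_small:
  fixes H s x :: real
  assumes H: "H > 0" and q: "12 * H^2 \<le> s^2" and x: "x > 3 * s^2"
  shows "H * sqrt x < x / 3"
proof -
  have x0: "x > 0" using x zero_le_power2[of s] by linarith
  have "9*H^2 < x" using q x zero_le_power2[of H] by linarith
  hence "(3*H)^2 < x" by (simp add: power_mult_distrib)
  hence "3*H < sqrt x" by (rule real_less_rsqrt)
  hence "3*H * sqrt x < sqrt x * sqrt x" using x0 by (intro mult_strict_right_mono) auto
  thus ?thesis using x0 by simp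
qed

text \<open>The theorem for arbitrary real parameters \<open>H\<close> (error size) and \<open>s\<close> (\<open>r = 3 s\<^sup>2\<close>).\<close>
lemma recursive_growth_bound:
  fixes H s :: real and \<beta> :: "nat \<Rightarrow> real"
  assumes H: "H > 0" and s: "s > 0" and q: "12 * H^2 \<le> s^2"
    and small: "\<And>m. m \<ge> 1 \<Longrightarrow> real m \<le> 3 * s^2 \<Longrightarrow> \<beta> m = 0"
    and rec: "\<And>m. m \<ge> 1 \<Longrightarrow> real m > 3 * s^2 \<Longrightarrow>
      \<exists>m1 m2. m1 \<ge> 1 \<and> m2 \<ge> 1 \<and> real m1 \<ge> real m / 3 \<and> real m2 \<ge> real m / 3 \<and>
        m \<le> m1 + m2 \<and> real (m1 + m2) \<le> real m + H * sqrt (real m) \<and>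
        \<beta> m \<le> \<beta> m1 + \<beta> m2 + H * sqrt (real m)"
    and m: "m \<ge> 1"
  shows "\<beta> m \<le> (if s^2 \<le> real m then growth_bound H s (real m) else 0)"
  using m
proof (induction m rule: less_induct)
  case (less m)
  show ?case
  proof (cases "real m \<le> 3 * s^2")
    case True
    thus ?thesis using small[OF less.prems] growth_bound_nonneg[OF H s] by simp
  next
    case False
    hence big: "real m > 3 * s^2" by simp
    hence m_pos: "real m > 0" using zero_le_power2[of s] by linarith
    have third_big: "s^2 \<le> real m / 3" using big by simp
    obtain m1 m2 where m1: "m1 \<ge> 1" and m2: "m2 \<ge> 1"
      and m13: "real m1 \<ge> real m / 3" and m23: "real m2 \<ge> real m / 3"
      and lower: "m \<le> m1 + m2" and upper: "real (m1 + m2) \<le> real m + H * sqrt (real m)"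
      and split: "\<beta> m \<le> \<beta> m1 + \<beta> m2 + H * sqrt (real m)"
      using rec[OF less.prems big] by blast
    have "H * sqrt (real m) < real m / 3" using error_term_small[OF H q big] .
    hence "m1 < m" "m2 < m" using upper m13 m23 by simp_all
    hence "\<beta> m1 \<le> growth_bound H s (real m1)" "\<beta> m2 \<le> growth_bound H s (real m2)"
      using less.IH m1 m2 m13 m23 third_big by fastforce+
    moreover have "growth_bound H s (real m1) + growth_bound H s (real m2) + H * sqrt (real m)
        \<le> growth_bound H s (real m)"
      using growth_bound_step[OF H s q m_pos m13 m23] lower upper by simp
    ultimately show ?thesis using split third_big by simp
  qed
qed

theorem mainTheorem2:
  fixes h :: nat and r :: real and \<beta> :: "nat \<Rightarrow> real"
  assumes h: "h \<ge> 1"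
    and r: "r \<ge> 36 * real h ^ 3"
    and small: "\<And>m. m \<ge> 1 \<Longrightarrow> real m \<le> r \<Longrightarrow> \<beta> m = 0"
    and rec: "\<And>m. m \<ge> 1 \<Longrightarrow> real m > r \<Longrightarrow>
      \<exists>m1 m2. m1 \<ge> 1 \<and> m2 \<ge> 1 \<and> real m1 \<ge> real m / 3 \<and> real m2 \<ge> real m / 3 \<and>
        m \<le> m1 + m2 \<and> real (m1 + m2) \<le> real m + real h powr (3/2) * sqrt (real m) \<and>
        \<beta> m \<le> \<beta> m1 + \<beta> m2 + real h powr (3/2) * sqrt (real m)"
  shows "\<And>m. m \<ge> 1 \<Longrightarrow> \<beta> m \<le>
      (if real m \<ge> r / 3
       then 10 * real h powr (3/2) * real m / sqrt (r / 3) - 10 * real h powr (3/2) * sqrt (real m)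
       else 0)"
proof -
  fix m :: nat assume m: "m \<ge> 1"
  define H where "H = real h powr (3/2)"
  define s where "s = sqrt (r/3)"
  have H: "H > 0" unfolding H_def using h by simp
  have H2: "H^2 = real h ^ 3"
  proof -
    have "H^2 = real h powr (real 2 * (3/2))" unfolding H_def using h by (subst powr_power) auto
    also have "\<dots> = real h powr (real 3)" by simp
    also have "\<dots> = real h ^ 3" using h by (subst powr_realpow) auto
    finally show ?thesis .
  qed
  have "real h ^ 3 \<ge> 1" using h by simp
  hence r_pos: "r > 0" using r by linarith
  have s: "s > 0" and s2: "s^2 = r/3" unfolding s_def using r_pos by simp_all
  have q: "12 * H^2 \<le> s^2" using H2 s2 r by simp
  have r_eq: "r = 3 * s^2" using s2 by simp
  have "\<beta> m \<le> (if s^2 \<le> real m then growth_bound H s (real m) else 0)"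
    by (rule recursive_growth_bound[OF H s q small[unfolded r_eq] rec[folded H_def, unfolded r_eq] m])
  thus "\<beta> m \<le> (if real m \<ge> r / 3
       then 10 * real h powr (3/2) * real m / sqrt (r / 3) - 10 * real h powr (3/2) * sqrt (real m)
       else 0)"
    using r_pos unfolding growth_bound_def H_def s_def by simp
qed

end
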